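(* Let $s$ be an aperiodic standard episturmian word over a finite alphabet, and let $k$ be the number of distinct letters occurring in $s$. Then there exists a coloring $c:\mathcal F^+ s\to\{0,1,\ldots,k\}$ of the non-empty factors of $s$ such that for every factorization $s=V_1V_2\cdots V_n\cdots$ of $s$ into non-empty factors $V_i$, there exist integers $i,j$ with $c(V_i)\neq c(V_j)$. (For instance, writing the letters of $s$ as $a_1,\ldots,a_k$: $c(V)=0$ if $V$ is not a prefix of $s$, and $c(V)=m$ if $V$ is a prefix of $s$ ending in $a_m$.)
   Context: An infinite word $s$ over a finite alphabet $A$ is standard episturmian if its set of factors is closed under reversal and every left special factor of $s$ is a prefix of $s$; here a factor $u$ is left special if there are distinct letters $x,y\in A$ with $xu$ and $yu$ both factors of $s$. Aperiodic means not ultimately periodic. $\mathcal F^+ s$ denotes the set of non-empty factors of $s$. *)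

theory Defs
  imports Main
begin

text \<open>Infinite words are functions nat => 'a; finite words are lists.\<close>

definition factor :: "(nat \<Rightarrow> 'a) \<Rightarrow> 'a list \<Rightarrow> bool" where
  "factor s u \<longleftrightarrow> (\<exists>i. u = map s [i..<i + length u])"

definition is_prefix :: "(nat \<Rightarrow> 'a) \<Rightarrow> 'a list \<Rightarrow> bool" where
  "is_prefix s u \<longleftrightarrow> u = map s [0..<length u]"

definition left_special :: "(nat \<Rightarrow> 'a) \<Rightarrow> 'a list \<Rightarrow> bool" where
  "left_special s u \<longleftrightarrow> (\<exists>x y. x \<noteq> y \<and> factor s (x # u) \<and> factor s (y # u))"

definition standard_episturmian :: "(nat \<Rightarrow> 'a) \<Rightarrow> bool" where
  "standard_episturmian s \<longleftrightarrow>
     (\<forall>u. factor s u \<longrightarrow> factor s (rev u)) \<and>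
     (\<forall>u. left_special s u \<longrightarrow> is_prefix s u)"

definition ultimately_periodic :: "(nat \<Rightarrow> 'a) \<Rightarrow> bool" where
  "ultimately_periodic s \<longleftrightarrow> (\<exists>p>0. \<exists>N. \<forall>n\<ge>N. s (n + p) = s n)"

definition factorization :: "(nat \<Rightarrow> 'a) \<Rightarrow> (nat \<Rightarrow> 'a list) \<Rightarrow> bool" where
  "factorization s V \<longleftrightarrow>
     (\<forall>n. V n \<noteq> []) \<and>
     (\<forall>n j. j < length (V n) \<longrightarrow> s ((\<Sum>m<n. length (V m)) + j) = V n ! j)"

end

theory Submission
  imports Defs
begin

text \<open>
  A
  monochromatic factorization then consists of prefixes of s all ending in one letter a. In a
  standard episturmian word every right special factor is the reversal of a prefix, since
  reversal makes it left special. If the tails of s starting at the boundaries after V 0 first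
  disagreed at offset m, the common factor of length m would be right special, which forces
  the two disagreeing letters to be a and s m; then the same factor preceded by the boundary
  letter a is right special too, which forces s m = a. So all these tails coincide and s is
  ultimately periodic.
\<close>

lemma factorI:
  assumes "\<And>k. k < length u \<Longrightarrow> s (i + k) = u ! k"
  shows "factor s u"
  unfolding factor_def
  by (rule exI[of _ i], rule nth_equalityI) (auto simp: assms)

lemma is_prefix_nth:
  assumes "is_prefix s u" "k < length u"
  shows "u ! k = s k"
  using assms unfolding is_prefix_def
  by (metis add_0 diff_zero nth_map_upt)

lemma last_factor_in_range:
  assumes "u \<noteq> []" "factor s u"
  shows "last u \<in> range s"
proof -
  obtain i where u: "u = map s [i..<i + length u]"
    using assms(2) unfolding factor_def by blast
  have "last u = u ! (length u - 1)"
    using assms(1) by (simp add: last_conv_nth)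
  also have "\<dots> = s (i + (length u - 1))"
    using assms(1) by (subst u) simp
  finally show ?thesis by simp
qed

lemma episturmian_right_special_reversed_prefix:
  assumes "standard_episturmian s"
    and agree: "\<And>k. k < m \<Longrightarrow> s (i + k) = s (j + k)"
    and differ: "s (i + m) \<noteq> s (j + m)"
    and "k < m"
  shows "s k = s (i + (m - 1 - k))"
proof -
  define u where "u = map (\<lambda>k. s (i + k)) [0..<m]"
  have "factor s (u @ [s (i + m)])"
    by (rule factorI[of _ s i]) (auto simp: u_def nth_append less_Suc_eq)
  moreover have "factor s (u @ [s (j + m)])"
    by (rule factorI[of _ s j]) (auto simp: u_def nth_append agree less_Suc_eq)
  ultimately have "factor s (rev (u @ [s (i + m)]))" "factor s (rev (u @ [s (j + m)]))"
    using assms(1) unfolding standard_episturmian_def by blast+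
  then have "left_special s (rev u)"
    unfolding left_special_def using differ by auto
  then have "is_prefix s (rev u)"
    using assms(1) unfolding standard_episturmian_def by blast
  then have "rev u ! k = s k"
    using \<open>k < m\<close> by (simp add: is_prefix_nth u_def)
  then show ?thesis
    using \<open>k < m\<close> by (simp add: rev_nth u_def)
qed

locale prefix_factorization_same_last =
  fixes s :: "nat \<Rightarrow> 'a" and V :: "nat \<Rightarrow> 'a list" and a :: 'a
  assumes episturmian: "standard_episturmian s"
    and factorization: "factorization s V"
    and prefix: "\<And>i. is_prefix s (V i)"
    and last_eq: "\<And>i. last (V i) = a"
begin

definition start :: "nat \<Rightarrow> nat" where
  "start j = (\<Sum>m<j. length (V m))"

lemma block_nonempty: "V j \<noteq> []"
  using factorization unfolding factorization_def by blast

lemma start_Suc: "start (Suc j) = start j + length (V j)"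
  by (simp add: start_def)

lemma s_start_add:
  assumes "k < length (V j)"
  shows "s (start j + k) = s k"
  using factorization assms is_prefix_nth[OF prefix assms]
  unfolding factorization_def start_def by auto

lemma s_block_last: "s (length (V j) - 1) = a"
  using is_prefix_nth[OF prefix, of "length (V j) - 1" j] block_nonempty[of j] last_eq[of j]
  by (simp add: last_conv_nth)

lemma start_ge_1:
  assumes "j \<ge> 1"
  shows "start j \<ge> 1"
proof -
  have "start j = start (j - 1) + length (V (j - 1))"
    using assms start_Suc[of "j - 1"] by simp
  then show ?thesis using block_nonempty[of "j - 1"] by (simp add: Suc_le_eq)
qed

lemma s_before_start:
  assumes "j \<ge> 1"
  shows "s (start j - 1) = a"
proof -
  obtain i where j: "j = Suc i" using assms by (cases j) auto
  have len: "length (V i) > 0" using block_nonempty by blast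
  have "start j - 1 = start i + (length (V i) - 1)"
    using len unfolding j start_Suc by linarith
  then show ?thesis
    using s_start_add[of "length (V i) - 1" i] s_block_last[of i] len by simp
qed

text \<open>
  Past the end of V j, the offset m - length (V j) is mirrored by the reversal property onto
  the last letter of V j.
\<close>
lemma letter_after_start:
  assumes agree: "\<And>k j. k < m \<Longrightarrow> j \<ge> 1 \<Longrightarrow> s (start j + k) = s (start 1 + k)"
    and reversal: "\<And>k. k < m \<Longrightarrow> s k = s (start 1 + (m - 1 - k))"
    and "j \<ge> 1"
  shows "s (start j + m) = (if length (V j) \<le> m then a else s m)"
proof (cases "length (V j) \<le> m")
  case True
  have len: "length (V j) > 0" using block_nonempty by blast
  have "s (start j + m) = s (start (Suc j) + (m - length (V j)))"
    using True by (simp add: start_Suc)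
  also have "\<dots> = s (start 1 + (m - length (V j)))"
    using agree[of "m - length (V j)" "Suc j"] diff_less[OF len] len True by simp
  also have "\<dots> = s (length (V j) - 1)"
  proof -
    have "length (V j) - 1 < m" "m - 1 - (length (V j) - 1) = m - length (V j)"
      using len True by linarith+
    then show ?thesis using reversal[of "length (V j) - 1"] by simp
  qed
  finally show ?thesis using True s_block_last by simp
next
  case False
  then show ?thesis using s_start_add[of m j] by simp
qed

lemma tails_agree:
  assumes "j \<ge> 1"
  shows "s (start j + k) = s (start 1 + k)"
  using assms
proof (induction k arbitrary: j rule: less_induct)
  case (less m)
  show ?case
  proof (rule ccontr)
    assume differ: "s (start j + m) \<noteq> s (start 1 + m)"
    have reversal: "s k = s (start 1 + (m - 1 - k))" if "k < m" for k
    proof (rule episturmian_right_special_reversed_prefix[OF episturmian _ _ that])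
      show "s (start 1 + k) = s (start j + k)" if "k < m" for k
        using less.IH[OF that less.prems] by simp
      show "s (start 1 + m) \<noteq> s (start j + m)"
        using differ by simp
    qed
    have letter: "s (start i + m) = (if length (V i) \<le> m then a else s m)" if "i \<ge> 1" for i
      by (rule letter_after_start[OF less.IH reversal that])
    obtain j1 j2 where j12: "j1 \<ge> 1" "j2 \<ge> 1" "s (start j1 + m) = a"
      "s (start j2 + m) = s m" "s m \<noteq> a"
      using that[of 1 j] that[of j 1] letter[of 1] letter[OF less.prems] differ less.prems
      by (auto split: if_splits)
    have agree: "s (start j1 - 1 + k) = s (start j2 - 1 + k)" if "k < Suc m" for k
    proof (cases k)
      case 0
      then show ?thesis using s_before_start j12 by simp
    next
      case (Suc k')
      then have "s (start j1 - 1 + k) = s (start j1 + k')" "s (start j2 - 1 + k) = s (start j2 + k')"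
        using start_ge_1[of j1] start_ge_1[of j2] j12 by simp_all
      moreover have "k' < m" using that Suc by simp
      ultimately show ?thesis using less.IH[of k' j1] less.IH[of k' j2] j12(1,2) by simp
    qed
    have "s (start j1 - 1 + Suc m) \<noteq> s (start j2 - 1 + Suc m)"
    proof -
      have "start j1 - 1 + Suc m = start j1 + m" "start j2 - 1 + Suc m = start j2 + m"
        using start_ge_1[of j1] start_ge_1[of j2] j12(1,2) by simp_all
      then show ?thesis using j12(3-5) by metis
    qed
    then have "s m = s (start j1 - 1 + (Suc m - 1 - m))"
      using episturmian_right_special_reversed_prefix[OF episturmian, of "Suc m" "start j1 - 1"
          "start j2 - 1" m] agree by blast
    then show False using s_before_start[of j1] j12 by simp
  qed
qed

lemma ultimately_periodic: "ultimately_periodic s"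
proof -
  have shift: "start 2 = start 1 + length (V 1)"
    using start_Suc[of 1] by (simp add: numeral_2_eq_2)
  have "s (n + length (V 1)) = s n" if "n \<ge> start 1" for n
    using tails_agree[of 2 "n - start 1"] that shift by (simp add: algebra_simps)
  then show ?thesis
    unfolding ultimately_periodic_def using block_nonempty[of 1]
    by (intro exI[of _ "length (V 1)"] exI[of _ "start 1"]) auto
qed

end

definition prefix_colouring :: "('a \<Rightarrow> nat) \<Rightarrow> (nat \<Rightarrow> 'a) \<Rightarrow> 'a list \<Rightarrow> nat" where
  "prefix_colouring g s u = (if u \<noteq> [] \<and> is_prefix s u then Suc (g (last u)) else 0)"

lemma prefix_colouring_le:
  assumes "\<And>x. x \<in> range s \<Longrightarrow> g x < n" "u \<noteq> []" "factor s u"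
  shows "prefix_colouring g s u \<le> n"
  using assms last_factor_in_range[of u s]
  unfolding prefix_colouring_def by (simp add: Suc_leI)

lemma factorization_first_prefix:
  assumes "factorization s V"
  shows "is_prefix s (V 0)"
  using assms unfolding factorization_def is_prefix_def
  by (intro nth_equalityI) (auto dest: spec[of _ 0])

lemma prefix_colouring_not_monochromatic:
  assumes "standard_episturmian s" "\<not> ultimately_periodic s"
    and inj: "inj_on g (range s)"
    and fac: "factorization s V"
  shows "\<exists>i j. prefix_colouring g s (V i) \<noteq> prefix_colouring g s (V j)"
proof (rule ccontr)
  assume "\<not> ?thesis"
  then have same: "prefix_colouring g s (V i) = prefix_colouring g s (V 0)" for i
    by blast
  have nonempty: "V i \<noteq> []" for i
    using fac unfolding factorization_def by blast
  have prefix: "is_prefix s (V i)" for i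
    using same[of i] factorization_first_prefix[OF fac] nonempty
    unfolding prefix_colouring_def by (auto split: if_splits)
  have "last (V i) \<in> range s" for i
    using is_prefix_nth[OF prefix, of "length (V i) - 1" i] nonempty[of i]
    by (simp add: last_conv_nth)
  moreover have "g (last (V i)) = g (last (V 0))" for i
    using same[of i] prefix nonempty unfolding prefix_colouring_def by simp
  ultimately have "last (V i) = last (V 0)" for i
    using inj by (meson inj_onD)
  then interpret prefix_factorization_same_last s V "last (V 0)"
    using assms(1) fac prefix by unfold_locales
  show False using ultimately_periodic assms(2) by blast
qed

theorem mainTheorem10:
  fixes s :: "nat \<Rightarrow> 'a"
  assumes "finite (range s)"
    and "standard_episturmian s"
    and "\<not> ultimately_periodic s"
  shows "\<exists>c :: 'a list \<Rightarrow> nat.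
           (\<forall>u. u \<noteq> [] \<and> factor s u \<longrightarrow> c u \<le> card (range s)) \<and>
           (\<forall>V. factorization s V \<longrightarrow> (\<exists>i j. c (V i) \<noteq> c (V j)))"
proof -
  obtain g where g: "bij_betw g (range s) {0..<card (range s)}"
    using ex_bij_betw_finite_nat[OF assms(1)] by blast
  then have "g x < card (range s)" if "x \<in> range s" for x
    using that bij_betwE by fastforce
  then have "\<forall>u. u \<noteq> [] \<and> factor s u \<longrightarrow> prefix_colouring g s u \<le> card (range s)"
    using prefix_colouring_le by blast
  moreover have "\<forall>V. factorization s V \<longrightarrow>
      (\<exists>i j. prefix_colouring g s (V i) \<noteq> prefix_colouring g s (V j))"
    using prefix_colouring_not_monochromatic[OF assms(2,3) bij_betw_imp_inj_on[OF g]] by blast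
  ultimately show ?thesis by (intro exI[of _ "prefix_colouring g s"] conjI)
qed

end
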